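(* Let $(G,E)$ be an undirected weighted graph with nodes $n_1,\dots,n_N$, symmetric nonnegative weights $w_{ij}$, strengths $k_i=\sum_s w_{is}$, $2m=\sum_i k_i>0$, let $\gamma\in\mathbb R$ and $\hat n\ge1$. Let $X=\{f\mid f:G\to\mathbb R^{\hat n}\}$, identified with $\mathbb R^{N\times\hat n}$ and given the Euclidean ($\ell_2$) metric. Then, as $\epsilon\to0^+$, the functionals $H_\epsilon$ $\Gamma$-converge to $H$ on $X$, where $$H_\epsilon(f)=\sum_{l=1}^{\hat n}\langle f^{(l)},\mathbf Lf^{(l)}\rangle+\frac{1}{\epsilon^2}\sum_{i=1}^N W_{\mathrm{multi}}(f(n_i))-\gamma\|f-\mathrm{mean}(f)\|_{\ell_2}^2,$$ $$H(f)=\begin{cases}|f|_{TV}-\gamma\|f-\mathrm{mean}(f)\|_{\ell_2}^2,& f\in X^p,\\ +\infty,&\text{otherwise.}\end{cases}$$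
   Context: $\mathbf L=\mathbf D-\mathbf W$ is the graph Laplacian, where $\mathbf W=[w_{ij}]$ and $\mathbf D=\mathrm{diag}(k_1,\dots,k_N)$; for $z:G\to\mathbb R$, $\langle z,\mathbf Lz\rangle=\frac12\sum_{i,j}w_{ij}(z_i-z_j)^2$. For $f\in X$, $f=(f^{(1)},\dots,f^{(\hat n)})$ with $f^{(l)}:G\to\mathbb R$. $V^{\hat n}=\{\vec e_1,\dots,\vec e_{\hat n}\}$ is the standard basis of $\mathbb R^{\hat n}$ and $X^p=\{f\mid f:G\to V^{\hat n}\}$. The multi-well potential is $W_{\mathrm{multi}}(x)=\prod_{l=1}^{\hat n}\|x-\vec e_l\|_{\ell_1}^2$ for $x\in\mathbb R^{\hat n}$. For $h:G\to\mathbb R$: $|h|_{TV}=\frac12\sum_{i,j}w_{ij}|h_i-h_j|$, $\|h\|_{\ell_2}^2=\sum_i k_ih_i^2$, $\mathrm{mean}(h)=\frac1{2m}\sum_ik_ih_i$; for vector-valued $f$ these are summed over components ($|f|_{TV}=\sum_l|f^{(l)}|_{TV}$, $\|f\|^2_{\ell_2}=\sum_l\|f^{(l)}\|^2_{\ell_2}$) and $\mathrm{mean}(f)$ is taken componentwise. $\Gamma$-convergence: functionals $F_\epsilon:X\to\mathbb R\cup\{\pm\infty\}$ $\Gamma$-converge to $F$ as $\epsilon\to0^+$ if for every sequence $\epsilon_n\to0^+$ and every $f\in X$: (i) for every sequence $f_n\to f$, $F(f)\le\liminf_n F_{\epsilon_n}(f_n)$; (ii) there exists a sequence $f_n\to f$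 with $F(f)\ge\limsup_nF_{\epsilon_n}(f_n)$. *)

theory Defs
  imports "HOL-Analysis.Analysis"
begin

text \<open>Nodes are the elements of a finite type 'v (N = CARD('v)); components are
indexed by a finite type 'l (n-hat = CARD('l) \<ge> 1). A function f : G \<rightarrow> R^n-hat
is an element of real^'l^'v, whose norm is the Euclidean (Frobenius) norm.\<close>

definition strength :: "('v::finite \<Rightarrow> 'v \<Rightarrow> real) \<Rightarrow> 'v \<Rightarrow> real" where
  "strength w i = (\<Sum>s\<in>UNIV. w i s)"

definition total_strength :: "('v::finite \<Rightarrow> 'v \<Rightarrow> real) \<Rightarrow> real" where
  "total_strength w = (\<Sum>i\<in>UNIV. strength w i)"

text \<open>Quadratic form of the graph Laplacian L = D - W: <z, L z>.\<close>
definition laplacian_form :: "('v::finite \<Rightarrow> 'v \<Rightarrow> real) \<Rightarrow> ('v \<Rightarrow> real) \<Rightarrow> real" where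
  "laplacian_form w z = (\<Sum>i\<in>UNIV. z i * (strength w i * z i - (\<Sum>j\<in>UNIV. w i j * z j)))"

definition comp :: "real^'l^'v \<Rightarrow> 'l \<Rightarrow> 'v \<Rightarrow> real" where
  "comp f l = (\<lambda>i. f $ i $ l)"

definition std_basis :: "'l::finite \<Rightarrow> real^'l" where
  "std_basis l = axis l 1"

definition l1_norm :: "real^'l::finite \<Rightarrow> real" where
  "l1_norm x = (\<Sum>j\<in>UNIV. \<bar>x $ j\<bar>)"

definition W_multi :: "real^'l::finite \<Rightarrow> real" where
  "W_multi x = (\<Prod>l\<in>UNIV. (l1_norm (x - std_basis l))\<^sup>2)"

definition graph_mean :: "('v::finite \<Rightarrow> 'v \<Rightarrow> real) \<Rightarrow> ('v \<Rightarrow> real) \<Rightarrow> real" where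
  "graph_mean w h = (1 / total_strength w) * (\<Sum>i\<in>UNIV. strength w i * h i)"

definition l2_sq :: "('v::finite \<Rightarrow> 'v \<Rightarrow> real) \<Rightarrow> ('v \<Rightarrow> real) \<Rightarrow> real" where
  "l2_sq w h = (\<Sum>i\<in>UNIV. strength w i * (h i)\<^sup>2)"

definition var_term :: "('v::finite \<Rightarrow> 'v \<Rightarrow> real) \<Rightarrow> real^'l::finite^'v \<Rightarrow> real" where
  "var_term w f = (\<Sum>l\<in>UNIV. l2_sq w (\<lambda>i. comp f l i - graph_mean w (comp f l)))"

definition tv :: "('v::finite \<Rightarrow> 'v \<Rightarrow> real) \<Rightarrow> ('v \<Rightarrow> real) \<Rightarrow> real" where
  "tv w h = (1/2) * (\<Sum>i\<in>UNIV. \<Sum>j\<in>UNIV. w i j * \<bar>h i - h j\<bar>)"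

definition tv_vec :: "('v::finite \<Rightarrow> 'v \<Rightarrow> real) \<Rightarrow> real^'l::finite^'v \<Rightarrow> real" where
  "tv_vec w f = (\<Sum>l\<in>UNIV. tv w (comp f l))"

definition Xp :: "(real^'l::finite^'v::finite) set" where
  "Xp = {f. \<forall>i. f $ i \<in> range std_basis}"

definition H_eps :: "('v::finite \<Rightarrow> 'v \<Rightarrow> real) \<Rightarrow> real \<Rightarrow> real \<Rightarrow> real^'l::finite^'v \<Rightarrow> real" where
  "H_eps w \<gamma> \<epsilon> f =
     (\<Sum>l\<in>UNIV. laplacian_form w (comp f l))
     + (1 / \<epsilon>\<^sup>2) * (\<Sum>i\<in>UNIV. W_multi (f $ i))
     - \<gamma> * var_term w f"

definition H_lim :: "('v::finite \<Rightarrow> 'v \<Rightarrow> real) \<Rightarrow> real \<Rightarrow> real^'l::finite^'v \<Rightarrow> ereal" where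
  "H_lim w \<gamma> f = (if f \<in> Xp then ereal (tv_vec w f - \<gamma> * var_term w f) else \<infinity>)"

definition gamma_converges ::
  "(real \<Rightarrow> 'a::metric_space \<Rightarrow> ereal) \<Rightarrow> ('a \<Rightarrow> ereal) \<Rightarrow> bool" where
  "gamma_converges F G \<longleftrightarrow>
     (\<forall>eps :: nat \<Rightarrow> real. (\<forall>n. eps n > 0) \<and> eps \<longlonglongrightarrow> 0 \<longrightarrow>
       (\<forall>f. (\<forall>fs. fs \<longlonglongrightarrow> f \<longrightarrow> G f \<le> liminf (\<lambda>n. F (eps n) (fs n))) \<and>
            (\<exists>fs. fs \<longlonglongrightarrow> f \<and> G f \<ge> limsup (\<lambda>n. F (eps n) (fs n)))))"

end

theory Submission
  imports Defs
begin

text \<open>Write \<open>H\<^sub>\<epsilon> = A + P / \<epsilon>\<^sup>2\<close>, where \<open>A\<close> (Dirichlet energy minus \<open>\<gamma>\<close> times the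
variance) and the well energy \<open>P \<ge> 0\<close> are continuous and \<open>P\<close> vanishes exactly on \<open>X\<^sup>p\<close>.
Continuity of \<open>A\<close> gives the liminf inequality on \<open>{P = 0}\<close> and makes the constant sequence a
recovery sequence; off \<open>{P = 0}\<close> the penalty forces \<open>H\<^sub>\<epsilon> \<rightarrow> \<infinity>\<close>. Finally, on
\<open>{0,1}\<close>-valued components \<open>(z\<^sub>i - z\<^sub>j)\<^sup>2 = |z\<^sub>i - z\<^sub>j|\<close>, so the Dirichlet energy is the total
variation there.\<close>

lemma filterlim_add_div_square_at_top:
  fixes a p \<epsilon> :: "nat \<Rightarrow> real"
  assumes "a \<longlonglongrightarrow> a0" and "p \<longlonglongrightarrow> p0" and "p0 > 0"
    and "\<epsilon> \<longlonglongrightarrow> 0" and "\<And>n. \<epsilon> n \<noteq> 0"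
  shows "filterlim (\<lambda>n. a n + p n / (\<epsilon> n)\<^sup>2) at_top sequentially"
proof -
  have "filterlim (\<lambda>n. inverse ((\<epsilon> n)\<^sup>2)) at_top sequentially"
    using assms(4,5)
    by (intro filterlim_inverse_at_top tendsto_power_zero) (auto intro: tendsto_eq_intros)
  then have "filterlim (\<lambda>n. p n * inverse ((\<epsilon> n)\<^sup>2)) at_top sequentially"
    by (rule filterlim_tendsto_pos_mult_at_top[OF assms(2,3)])
  then show ?thesis
    unfolding divide_inverse by (rule filterlim_tendsto_add_at_top[OF assms(1)])
qed

lemma gamma_converges_penalty:
  fixes A P :: "'a::metric_space \<Rightarrow> real"
  assumes A: "\<And>x. isCont A x" and P: "\<And>x. isCont P x" and P_nonneg: "\<And>x. P x \<ge> 0"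
  shows "gamma_converges (\<lambda>\<epsilon> x. ereal (A x + P x / \<epsilon>\<^sup>2))
           (\<lambda>x. if P x = 0 then ereal (A x) else \<infinity>)"
  unfolding gamma_converges_def
proof (intro allI impI conjI)
  fix \<epsilon> :: "nat \<Rightarrow> real" and x :: 'a
  assume \<epsilon>: "(\<forall>n. \<epsilon> n > 0) \<and> \<epsilon> \<longlonglongrightarrow> 0"
  show "\<exists>xs. xs \<longlonglongrightarrow> x \<and>
      (if P x = 0 then ereal (A x) else \<infinity>)
        \<ge> limsup (\<lambda>n. ereal (A (xs n) + P (xs n) / (\<epsilon> n)\<^sup>2))"
    by (intro exI[of _ "\<lambda>_. x"]) (simp add: Limsup_const)
  fix xs assume xs: "xs \<longlonglongrightarrow> x"
  have A_lim: "(\<lambda>n. A (xs n)) \<longlonglongrightarrow> A x" and P_lim: "(\<lambda>n. P (xs n)) \<longlonglongrightarrow> P x"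
    using isCont_tendsto_compose[OF A xs] isCont_tendsto_compose[OF P xs] .
  show "(if P x = 0 then ereal (A x) else \<infinity>)
      \<le> liminf (\<lambda>n. ereal (A (xs n) + P (xs n) / (\<epsilon> n)\<^sup>2))"
  proof (cases "P x = 0")
    case True
    have "ereal (A x) = liminf (\<lambda>n. ereal (A (xs n)))"
      using A_lim by (intro lim_imp_Liminf[symmetric]) auto
    also have "\<dots> \<le> liminf (\<lambda>n. ereal (A (xs n) + P (xs n) / (\<epsilon> n)\<^sup>2))"
      by (intro Liminf_mono always_eventually allI) (simp add: P_nonneg)
    finally show ?thesis using True by simp
  next
    case False
    then have "P x > 0" using P_nonneg[of x] by simp
    then have "filterlim (\<lambda>n. A (xs n) + P (xs n) / (\<epsilon> n)\<^sup>2) at_top sequentially"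
      using \<epsilon> by (intro filterlim_add_div_square_at_top[OF A_lim P_lim])
        (auto simp: less_imp_neq[symmetric])
    then have "liminf (\<lambda>n. ereal (A (xs n) + P (xs n) / (\<epsilon> n)\<^sup>2)) = \<infinity>"
      by (intro lim_imp_Liminf) (auto simp: tendsto_PInfty_eq_at_top)
    then show ?thesis by simp
  qed
qed

lemma laplacian_form_eq_dirichlet:
  fixes w :: "'v::finite \<Rightarrow> 'v \<Rightarrow> real"
  assumes sym: "\<And>i j. w i j = w j i"
  shows "laplacian_form w z = (1/2) * (\<Sum>i\<in>UNIV. \<Sum>j\<in>UNIV. w i j * (z i - z j)\<^sup>2)"
proof -
  have L: "laplacian_form w z = (\<Sum>i\<in>UNIV. \<Sum>j\<in>UNIV. w i j * (z i * (z i - z j)))"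
    unfolding laplacian_form_def strength_def
    by (simp add: sum_distrib_left sum_distrib_right sum_subtractf[symmetric] algebra_simps)
  have swap: "(\<Sum>i\<in>UNIV. \<Sum>j\<in>UNIV. w i j * (z j * (z j - z i)))
        = (\<Sum>i\<in>UNIV. \<Sum>j\<in>UNIV. w i j * (z i * (z i - z j)))"
    by (subst sum.swap) (simp add: sym)
  have "(z i - z j)\<^sup>2 = z i * (z i - z j) + z j * (z j - z i)" for i j
    by (simp add: power2_eq_square algebra_simps)
  then have "(\<Sum>i\<in>UNIV. \<Sum>j\<in>UNIV. w i j * (z i - z j)\<^sup>2)
      = (\<Sum>i\<in>UNIV. \<Sum>j\<in>UNIV. w i j * (z i * (z i - z j)))
        + (\<Sum>i\<in>UNIV. \<Sum>j\<in>UNIV. w i j * (z j * (z j - z i)))"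
    by (simp add: distrib_left sum.distrib)
  with L swap show ?thesis by simp
qed

lemma laplacian_form_eq_tv:
  fixes w :: "'v::finite \<Rightarrow> 'v \<Rightarrow> real"
  assumes "\<And>i j. w i j = w j i" and "\<And>i. z i \<in> {0, 1}"
  shows "laplacian_form w z = tv w z"
proof -
  have "(z i - z j)\<^sup>2 = \<bar>z i - z j\<bar>" for i j
    using assms(2)[of i] assms(2)[of j] by auto
  then show ?thesis
    unfolding laplacian_form_eq_dirichlet[OF assms(1)] tv_def by simp
qed

lemma l1_norm_eq_0_iff: "l1_norm x = 0 \<longleftrightarrow> x = 0"
  unfolding l1_norm_def by (simp add: sum_nonneg_eq_0_iff vec_eq_iff)

lemma W_multi_nonneg: "W_multi x \<ge> 0"
  unfolding W_multi_def by (intro prod_nonneg) auto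

lemma W_multi_eq_0_iff: "W_multi x = 0 \<longleftrightarrow> x \<in> range std_basis"
  unfolding W_multi_def by (auto simp: l1_norm_eq_0_iff)

lemma Xp_iff_sum_W_multi_eq_0: "f \<in> Xp \<longleftrightarrow> (\<Sum>i\<in>UNIV. W_multi (f $ i)) = 0"
  unfolding Xp_def by (simp add: sum_nonneg_eq_0_iff W_multi_nonneg W_multi_eq_0_iff)

lemma comp_Xp_01:
  assumes "f \<in> Xp"
  shows "comp f l i \<in> {0, 1}"
proof -
  from assms obtain k where "f $ i = axis k 1"
    unfolding Xp_def std_basis_def by auto
  then show ?thesis
    unfolding comp_def by (simp add: axis_def)
qed

lemma isCont_dirichlet_minus_variance:
  "isCont (\<lambda>f::real^'l::finite^'v::finite.
     (\<Sum>l\<in>UNIV. laplacian_form w (comp f l)) - \<gamma> * var_term w f) f"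
  unfolding laplacian_form_def var_term_def l2_sq_def graph_mean_def comp_def
  by (intro continuous_intros)

lemma isCont_sum_W_multi:
  "isCont (\<lambda>f::real^'l::finite^'v::finite. \<Sum>i\<in>UNIV. W_multi (f $ i)) f"
  unfolding W_multi_def l1_norm_def
  by (simp only: vector_minus_component) (intro continuous_intros)

theorem mainTheorem2:
  fixes w :: "'v::finite \<Rightarrow> 'v \<Rightarrow> real" and \<gamma> :: real
  assumes "\<And>i j. w i j = w j i"
    and "\<And>i j. w i j \<ge> 0"
    and "total_strength w > 0"
  shows "gamma_converges
           (\<lambda>\<epsilon> (f :: real^'l::finite^'v). ereal (H_eps w \<gamma> \<epsilon> f))
           (H_lim w \<gamma>)"
proof -
  define A where "A f = (\<Sum>l\<in>UNIV. laplacian_form w (comp f l)) - \<gamma> * var_term w f"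
    for f :: "real^'l^'v"
  define P where "P f = (\<Sum>i\<in>UNIV. W_multi (f $ i))" for f :: "real^'l^'v"
  have H_eps_eq: "H_eps w \<gamma> \<epsilon> f = A f + P f / \<epsilon>\<^sup>2" for \<epsilon> f
    unfolding H_eps_def A_def P_def by simp
  have "A f = tv_vec w f - \<gamma> * var_term w f" if "f \<in> Xp" for f
  proof -
    have "laplacian_form w (comp f l) = tv w (comp f l)" for l
      using comp_Xp_01[OF that] by (intro laplacian_form_eq_tv[OF assms(1)])
    then show ?thesis
      unfolding A_def tv_vec_def by simp
  qed
  then have H_lim_eq: "H_lim w \<gamma> f = (if P f = 0 then ereal (A f) else \<infinity>)" for f
    unfolding H_lim_def P_def by (simp add: Xp_iff_sum_W_multi_eq_0)
  have "gamma_converges (\<lambda>\<epsilon> f. ereal (A f + P f / \<epsilon>\<^sup>2))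
          (\<lambda>f. if P f = 0 then ereal (A f) else \<infinity>)"
    unfolding A_def P_def
    by (intro gamma_converges_penalty isCont_dirichlet_minus_variance isCont_sum_W_multi
        sum_nonneg W_multi_nonneg)
  then show ?thesis
    by (simp add: H_eps_eq H_lim_eq[abs_def])
qed

end
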